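(* Let $n\ge 5$ be even and let $x,y$ be adjacent vertices of $Q_n$ with $f_n(x)+f_n(y)=\operatorname{str}_{f_n}(Q_n)$. If $x$ and $y$ both begin with $10$, then $$\operatorname{str}_{f_n}(Q_n)\le \operatorname{str}_{f_{n-2}}(Q_{n-2})+3\cdot 2^{n-2}+\binom{n-3}{\lceil (n-3)/2\rceil}+\binom{n-2}{\lceil (n-2)/2\rceil}.$$
   Context: $Q_n$ is the $n$-dimensional hypercube: vertices are the $n$-bit strings, adjacent iff they differ in exactly one position. For a bijection $f:V(G)\to\{1,\dots,|V(G)|\}$, $\operatorname{str}_f(G)=\max\{f(u)+f(v):uv\in E(G)\}$. An $n$-bit string is $x_1\cdots x_n$, $x_i\in\{0,1\}$; its weight is its number of $1$s. Lexicographic order: $x<y$ if for some $k$, $x_j=y_j$ for $j<k$ and $x_k<y_k$. $S_n^i$ is the sequence of $n$-bit strings of weight $i$ in increasing lexicographic order; $R_n^i$ is the same set in decreasing lexicographic order. $S_n$ is the concatenation $(R_n^1,R_n^3,\dots,R_n^{n-1},S_n^n,S_n^{n-2},\dots,S_n^2,S_n^0)$ for even $n$ and $(R_n^1,R_n^3,\dots,R_n^{n-2},R_n^n,S_n^{n-1},\dots,S_n^2,S_n^0)$ for odd $n$; $f_n$ maps the string in position $j$ of $S_n$ to $j$. *)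

theory Defs
  imports Complex_Main
begin

(* n-bit strings are lists of booleans of length n; True = 1, False = 0 *)

definition bitstrings :: "nat \<Rightarrow> bool list set" where
  "bitstrings n = {x. length x = n}"

definition weight :: "bool list \<Rightarrow> nat" where
  "weight x = length (filter id x)"

definition Q_adj :: "nat \<Rightarrow> bool list \<Rightarrow> bool list \<Rightarrow> bool" where
  "Q_adj n x y \<longleftrightarrow> length x = n \<and> length y = n \<and> card {i. i < n \<and> x ! i \<noteq> y ! i} = 1"

definition lex_less :: "bool list \<Rightarrow> bool list \<Rightarrow> bool" where
  "lex_less x y \<longleftrightarrow> length x = length y \<and>
     (\<exists>k < length x. (\<forall>j < k. x ! j = y ! j) \<and> \<not> x ! k \<and> y ! k)"

definition S_seq :: "nat \<Rightarrow> nat \<Rightarrow> bool list list" where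
  "S_seq n i = (THE xs. sorted_wrt lex_less xs \<and> set xs = {x \<in> bitstrings n. weight x = i})"

definition R_seq :: "nat \<Rightarrow> nat \<Rightarrow> bool list list" where
  "R_seq n i = rev (S_seq n i)"

definition Sn :: "nat \<Rightarrow> bool list list" where
  "Sn n = (if even n then
      concat (map (\<lambda>j. R_seq n (2*j+1)) [0..<n div 2]) @
      concat (map (\<lambda>j. S_seq n (n - 2*j)) [0..<n div 2 + 1])
    else
      concat (map (\<lambda>j. R_seq n (2*j+1)) [0..<(n+1) div 2]) @
      concat (map (\<lambda>j. S_seq n (n - 1 - 2*j)) [0..<(n+1) div 2]))"

(* f_n : string in position j (1-based) of S_n is mapped to j *)
definition f_lab :: "nat \<Rightarrow> bool list \<Rightarrow> nat" where
  "f_lab n x = (THE j. 1 \<le> j \<and> j \<le> length (Sn n) \<and> Sn n ! (j - 1) = x)"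

definition strength :: "nat \<Rightarrow> (bool list \<Rightarrow> nat) \<Rightarrow> nat" where
  "strength n f = Max {f u + f v | u v. Q_adj n u v}"

end

theory Submission
  imports Defs "HOL-Library.List_Lexorder"
begin

(* f_n(x) - 1 is the number of strings preceding x in S_n; counting them weight by weight expresses
   it through the numbers of strings whose weight lies in a given set.  Let m = n - 2 and x = 10z.
   Splitting the predecessors of x by their first two bits, and the predecessors of the complement
   ~z in S_m via complementation, shows that f_n(10z) - f_m(~z) is an explicit sum of binomial
   coefficients depending only on the weight of z: the strings of that weight lexicographically on
   one side of z are counted on both sides and cancel.  Adjacent z1, z2 have weights k and k + 1;
   by the alternating-sum identity for binomial coefficients the two differences add up to exactly
   3 * 2^m + C(m - 1, k) + C(m, k) if k is odd, and to at most 3 * 2^m if k is even.  Finally ~z1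
   and ~z2 are adjacent in Q_m, so f_m(~z1) + f_m(~z2) <= str(Q_m). *)

lemma weight_le_length: "weight x \<le> length x"
  unfolding weight_def by simp

lemma weight_Nil [simp]: "weight [] = 0"
  and weight_Cons_True [simp]: "weight (True # v) = Suc (weight v)"
  and weight_Cons_False [simp]: "weight (False # v) = weight v"
  by (simp_all add: weight_def)

lemma weight_map_Not: "weight (map Not u) = length u - weight u"
  unfolding weight_def by (induction u) (auto simp: Suc_diff_le length_filter_le)

lemma weight_eq_card: "weight z = card {i. i < length z \<and> z ! i}"
  unfolding weight_def by (simp add: length_filter_conv_card)

section \<open>The sequence S_n\<close>

lemma take_eq_take_iff_nth:
  "i \<le> length x \<Longrightarrow> i \<le> length y \<Longrightarrow>
    take i x = take i y \<longleftrightarrow> (\<forall>j<i. x ! j = y ! j)"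
  by (metis nth_take nth_take_lemma)

lemma lex_less_iff_less:
  assumes "length x = length y"
  shows "lex_less x y \<longleftrightarrow> x < y"
proof -
  have "take i x = take i y \<longleftrightarrow> (\<forall>j<i. x ! j = y ! j)" if "i < length y" for i
    using that assms by (simp add: take_eq_take_iff_nth)
  then show ?thesis
    using assms unfolding lex_less_def list_less_def lexord_take_index_conv
    by auto
qed

lemma finite_bool_lists_length_eq: "finite {u :: bool list. length u = m \<and> P u}"
  using finite_lists_length_eq[of "UNIV :: bool set" m] by (rule finite_subset[rotated]) auto

lemma S_seq_eq_sorted_list_of_set:
  "S_seq n i = sorted_list_of_set {x \<in> bitstrings n. weight x = i}"
proof -
  let ?A = "{x \<in> bitstrings n. weight x = i}"
  have fin: "finite ?A"
    using finite_bool_lists_length_eq[of n "\<lambda>x. weight x = i"] by (simp add: bitstrings_def)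
  have lex_iff: "sorted_wrt lex_less xs \<longleftrightarrow> sorted_wrt (<) xs" if "set xs = ?A" for xs
  proof -
    have "lex_less a b \<longleftrightarrow> a < b" if "a \<in> set xs" "b \<in> set xs" for a b
      using that \<open>set xs = ?A\<close> by (simp add: bitstrings_def lex_less_iff_less)
    then show ?thesis
      using sorted_wrt_mono_rel[of xs lex_less "(<)"] sorted_wrt_mono_rel[of xs "(<)" lex_less]
      by blast
  qed
  show ?thesis
    unfolding S_seq_def
  proof (rule the_equality)
    show "sorted_wrt lex_less (sorted_list_of_set ?A) \<and> set (sorted_list_of_set ?A) = ?A"
      using lex_iff set_sorted_list_of_set[OF fin] strict_sorted_list_of_set[of ?A] by blast
  next
    fix xs assume "sorted_wrt lex_less xs \<and> set xs = ?A"
    then show "xs = sorted_list_of_set ?A"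
      using lex_iff set_sorted_list_of_set[OF fin] strict_sorted_list_of_set[of ?A]
      by (metis strict_sorted_equal)
  qed
qed

definition precedes :: "bool list \<Rightarrow> bool list \<Rightarrow> bool" where
  "precedes y x \<longleftrightarrow>
     (if odd (weight y)
      then odd (weight x) \<longrightarrow> weight y < weight x \<or> (weight y = weight x \<and> x < y)
      else even (weight x) \<and> (weight x < weight y \<or> (weight y = weight x \<and> y < x)))"

lemma precedes_asym: "precedes a b \<Longrightarrow> \<not> precedes b a"
  using less_not_sym[of a b] unfolding precedes_def
  by (cases "odd (weight a)"; cases "odd (weight b)") auto

lemma sorted_wrt_concat_map_upt:
  assumes "\<And>j. j < k \<Longrightarrow> sorted_wrt P (f j)"
    and "\<And>j j' a b. j < j' \<Longrightarrow> j' < k \<Longrightarrow>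
      a \<in> set (f j) \<Longrightarrow> b \<in> set (f j') \<Longrightarrow> P a b"
  shows "sorted_wrt P (concat (map f [0..<k]))"
  using assms
proof (induction k)
  case 0
  then show ?case by simp
next
  case (Suc k)
  then have "\<forall>a \<in> set (concat (map f [0..<k])). \<forall>b \<in> set (f k). P a b"
    by auto
  with Suc show ?case by (simp add: sorted_wrt_append)
qed

lemma set_S_seq: "set (S_seq n i) = {x \<in> bitstrings n. weight x = i}"
  and sorted_S_seq: "sorted_wrt (<) (S_seq n i)"
proof -
  have "finite {x \<in> bitstrings n. weight x = i}"
    using finite_bool_lists_length_eq[of n "\<lambda>x. weight x = i"] by (simp add: bitstrings_def)
  then show "set (S_seq n i) = {x \<in> bitstrings n. weight x = i}" "sorted_wrt (<) (S_seq n i)"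
    by (simp_all add: S_seq_eq_sorted_list_of_set)
qed

lemma sorted_wrt_precedes_Sn:
  assumes "even n"
  shows "sorted_wrt precedes (Sn n)"
proof -
  have odd_part: "sorted_wrt precedes (concat (map (\<lambda>j. R_seq n (2 * j + 1)) [0..<n div 2]))"
  proof (rule sorted_wrt_concat_map_upt)
    fix j
    show "sorted_wrt precedes (R_seq n (2 * j + 1))"
      unfolding R_seq_def sorted_wrt_rev
      by (rule sorted_wrt_mono_rel[OF _ sorted_S_seq]) (auto simp: set_S_seq precedes_def)
  qed (auto simp: R_seq_def set_S_seq precedes_def)
  have even_part: "sorted_wrt precedes (concat (map (\<lambda>j. S_seq n (n - 2 * j)) [0..<n div 2 + 1]))"
  proof (rule sorted_wrt_concat_map_upt)
    fix j
    show "sorted_wrt precedes (S_seq n (n - 2 * j))"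
      by (rule sorted_wrt_mono_rel[OF _ sorted_S_seq])
        (use assms in \<open>auto simp: set_S_seq precedes_def\<close>)
  qed (use assms in \<open>auto simp: set_S_seq precedes_def\<close>)
  have "precedes a b"
    if "a \<in> set (concat (map (\<lambda>j. R_seq n (2 * j + 1)) [0..<n div 2]))"
      and "b \<in> set (concat (map (\<lambda>j. S_seq n (n - 2 * j)) [0..<n div 2 + 1]))" for a b
    using that assms by (auto simp: R_seq_def set_S_seq precedes_def)
  with odd_part even_part assms show ?thesis
    unfolding Sn_def by (simp add: sorted_wrt_append)
qed

lemma set_Sn:
  assumes "even n"
  shows "set (Sn n) = bitstrings n"
proof
  show "set (Sn n) \<subseteq> bitstrings n"
    unfolding Sn_def using assms by (auto simp: R_seq_def set_S_seq)
next
  show "bitstrings n \<subseteq> set (Sn n)"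
  proof
    fix x assume x: "x \<in> bitstrings n"
    then have le: "weight x \<le> n"
      using weight_le_length[of x] by (simp add: bitstrings_def)
    show "x \<in> set (Sn n)"
    proof (cases "odd (weight x)")
      case True
      then obtain j where j: "weight x = 2 * j + 1" by (metis oddE)
      with le assms have "j < n div 2" by presburger
      with assms x j show ?thesis
        unfolding Sn_def by (auto simp: R_seq_def set_S_seq intro!: bexI[of _ j])
    next
      case False
      with le assms have "weight x = n - 2 * ((n - weight x) div 2)" "(n - weight x) div 2 < n div 2 + 1"
        by presburger+
      with assms x show ?thesis
        unfolding Sn_def by (auto simp: set_S_seq intro!: bexI[of _ "(n - weight x) div 2"])
    qed
  qed
qed

lemma distinct_if_sorted_wrt_irrefl:
  assumes "sorted_wrt P xs" and "\<And>a. \<not> P a a"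
  shows "distinct xs"
  using assms by (induction xs) auto

lemma card_predecessors_sorted_wrt:
  assumes sorted: "sorted_wrt P xs" and asym: "\<And>a b. P a b \<Longrightarrow> \<not> P b a" and i: "i < length xs"
  shows "card {y \<in> set xs. P y (xs ! i)} = i"
proof -
  have pred_iff: "P (xs ! j) (xs ! i) \<longleftrightarrow> j < i" if "j < length xs" for j
    using sorted that i asym by (metis linorder_neq_iff sorted_wrt_nth_less)
  have "{y \<in> set xs. P y (xs ! i)} = (\<lambda>j. xs ! j) ` {..<i}"
  proof (intro set_eqI iffI)
    fix y assume "y \<in> {y \<in> set xs. P y (xs ! i)}"
    then obtain j where "j < length xs" "y = xs ! j" "P y (xs ! i)"
      by (auto simp: in_set_conv_nth)
    then show "y \<in> (\<lambda>j. xs ! j) ` {..<i}"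
      using pred_iff by blast
  next
    fix y assume "y \<in> (\<lambda>j. xs ! j) ` {..<i}"
    then show "y \<in> {y \<in> set xs. P y (xs ! i)}"
      using pred_iff i by auto
  qed
  moreover have "inj_on (\<lambda>j. xs ! j) {..<i}"
  proof -
    have "distinct xs"
      using distinct_if_sorted_wrt_irrefl sorted asym by blast
    then show ?thesis
      using i by (simp add: inj_on_def nth_eq_iff_index_eq)
  qed
  ultimately show ?thesis
    by (simp add: card_image)
qed

lemma f_lab_eq_Suc_card_precedes:
  assumes "even n" "length x = n"
  shows "f_lab n x = Suc (card {y. length y = n \<and> precedes y x})"
proof -
  note sorted = sorted_wrt_precedes_Sn[OF assms(1)]
  have "x \<in> set (Sn n)"
    using set_Sn assms by (simp add: bitstrings_def)
  then obtain i where i: "i < length (Sn n)" "Sn n ! i = x"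
    by (auto simp: in_set_conv_nth)
  have "{y. length y = n \<and> precedes y x} = {y \<in> set (Sn n). precedes y (Sn n ! i)}"
    using set_Sn[OF assms(1)] i by (auto simp: bitstrings_def)
  then have card: "card {y. length y = n \<and> precedes y x} = i"
    using card_predecessors_sorted_wrt[OF sorted precedes_asym i(1)] by simp
  have distinct: "distinct (Sn n)"
    using distinct_if_sorted_wrt_irrefl sorted precedes_asym by blast
  have "(THE j. 1 \<le> j \<and> j \<le> length (Sn n) \<and> Sn n ! (j - 1) = x) = Suc i"
  proof (rule the_equality)
    fix j assume "1 \<le> j \<and> j \<le> length (Sn n) \<and> Sn n ! (j - 1) = x"
    with i distinct have "j - 1 = i"
      using nth_eq_iff_index_eq by fastforce
    then show "j = Suc i"
      using \<open>1 \<le> j \<and> _\<close> by linarith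
  qed (use i in auto)
  then show ?thesis
    unfolding f_lab_def card .
qed

section \<open>Counting strings by weight\<close>

definition count_weight :: "nat \<Rightarrow> (nat \<Rightarrow> bool) \<Rightarrow> nat" where
  "count_weight m P = card {u :: bool list. length u = m \<and> P (weight u)}"

lemma card_bool_lists_Suc:
  "card {u :: bool list. length u = Suc m \<and> Q u}
     = card {v. length v = m \<and> Q (True # v)} + card {v. length v = m \<and> Q (False # v)}"
proof -
  have split: "{u :: bool list. length u = Suc m \<and> Q u}
      = Cons True ` {v. length v = m \<and> Q (True # v)} \<union> Cons False ` {v. length v = m \<and> Q (False # v)}"
  proof (intro set_eqI iffI)
    fix u assume "u \<in> {u :: bool list. length u = Suc m \<and> Q u}"
    then obtain a v where "u = a # v" "length v = m" "Q (a # v)"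
      by (cases u) auto
    then show "u \<in> Cons True ` {v. length v = m \<and> Q (True # v)}
      \<union> Cons False ` {v. length v = m \<and> Q (False # v)}"
      by (cases a) auto
  qed auto
  show ?thesis
    unfolding split
    by (subst card_Un_disjoint) (auto simp: finite_bool_lists_length_eq card_image)
qed

lemma card_weight_eq: "card {u :: bool list. length u = m \<and> weight u = k} = m choose k"
proof (induction m arbitrary: k)
  case 0
  have "{u :: bool list. length u = 0 \<and> weight u = k} = (if k = 0 then {[]} else {})"
    by auto
  then show ?case by simp
next
  case (Suc m)
  then show ?case
    by (cases k) (simp_all add: card_bool_lists_Suc)
qed

lemma count_weight_eq_sum: "count_weight m P = (\<Sum>j\<le>m. if P j then m choose j else 0)"
proof -
  let ?S = "{u :: bool list. length u = m \<and> P (weight u)}"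
  have "count_weight m P = (\<Sum>j\<le>m. card {u \<in> ?S. weight u = j})"
    unfolding count_weight_def card_eq_sum
    by (rule sum.group[symmetric]) (auto simp: finite_bool_lists_length_eq weight_le_length)
  also have "\<dots> = (\<Sum>j\<le>m. if P j then m choose j else 0)"
  proof (rule sum.cong)
    fix j
    have "{u \<in> ?S. weight u = j} = (if P j then {u. length u = m \<and> weight u = j} else {})"
      by auto
    then show "card {u \<in> ?S. weight u = j} = (if P j then m choose j else 0)"
      by (simp add: card_weight_eq)
  qed simp
  finally show ?thesis .
qed

lemma count_weight_True: "count_weight m (\<lambda>_. True) = 2 ^ m"
  by (simp add: count_weight_eq_sum choose_row_sum)

lemma count_weight_eq_choose: "count_weight m (\<lambda>j. j = k) = m choose k"
  by (simp add: count_weight_def card_weight_eq)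

lemma count_weight_Suc: "count_weight (Suc m) P = count_weight m (\<lambda>j. P (Suc j)) + count_weight m P"
  unfolding count_weight_def by (simp add: card_bool_lists_Suc)

lemma count_weight_even_odd_above:
  assumes "odd k"
  shows "count_weight (Suc p) (\<lambda>j. even j \<and> k < j)
       = count_weight (Suc p) (\<lambda>j. odd j \<and> k < j) + (p choose k)"
proof -
  have "count_weight p (\<lambda>j. odd j \<and> k \<le> j) + count_weight p (\<lambda>j. even j \<and> k < j)
      = count_weight p (\<lambda>j. even j \<and> k \<le> j) + count_weight p (\<lambda>j. odd j \<and> k < j)
        + count_weight p (\<lambda>j. j = k)"
    unfolding count_weight_eq_sum sum.distrib[symmetric]
    by (rule sum.cong) (use assms in auto)
  then show ?thesis
    by (simp add: count_weight_Suc count_weight_eq_choose Suc_le_eq[symmetric])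
qed

section \<open>Labels of strings beginning with 10\<close>

lemma map_Not_less_map_Not_iff: "length u = length z \<Longrightarrow> map Not u < map Not z \<longleftrightarrow> z < u"
proof (induction u arbitrary: z)
  case Nil
  then show ?case by simp
next
  case (Cons a u)
  then obtain b z' where "z = b # z'" by (cases z) auto
  with Cons show ?case by (cases a; cases b) auto
qed

lemma precedes_map_Not_iff:
  assumes "even m" "length u = m" "length z = m"
  shows "precedes (map Not u) (map Not z)
    \<longleftrightarrow> (if even (weight u) = even (weight z) then precedes z u else precedes u z)"
proof -
  have "weight u \<le> m" "weight z \<le> m"
    using assms weight_le_length by metis+
  with \<open>even m\<close> have
    "even (m - weight u) \<longleftrightarrow> even (weight u)" "even (m - weight z) \<longleftrightarrow> even (weight z)"
    "m - weight u < m - weight z \<longleftrightarrow> weight z < weight u"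
    "m - weight z < m - weight u \<longleftrightarrow> weight u < weight z"
    "m - weight u = m - weight z \<longleftrightarrow> weight u = weight z"
    by presburger+
  moreover have "map Not u < map Not z \<longleftrightarrow> z < u" "map Not z < map Not u \<longleftrightarrow> u < z"
    using assms by (simp_all add: map_Not_less_map_Not_iff)
  ultimately show ?thesis
    using assms unfolding precedes_def weight_map_Not
    by (cases "even (weight u)"; cases "even (weight z)") auto
qed

lemma card_map_Not_bool_lists:
  "card {u :: bool list. length u = m \<and> Q u} = card {u. length u = m \<and> Q (map Not u)}"
proof -
  have "bij_betw (map Not) {u. length u = m \<and> Q (map Not u)} {u :: bool list. length u = m \<and> Q u}"
    by (rule bij_betw_byWitness[where f' = "map Not"]) (auto simp: comp_def)
  then show ?thesis
    by (simp add: bij_betw_same_card)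
qed

lemma card_weight_disj:
  assumes "\<not> P w"
  shows "card {u :: bool list. length u = m \<and> (P (weight u) \<or> weight u = w \<and> R u)}
     = count_weight m P + card {u. length u = m \<and> weight u = w \<and> R u}"
proof -
  have split: "{u :: bool list. length u = m \<and> (P (weight u) \<or> weight u = w \<and> R u)}
     = {u. length u = m \<and> P (weight u)} \<union> {u. length u = m \<and> weight u = w \<and> R u}"
    by auto
  show ?thesis
    unfolding count_weight_def split using assms
    by (subst card_Un_disjoint) (auto simp: finite_bool_lists_length_eq)
qed

lemma card_bool_lists_Suc_Suc:
  "card {y :: bool list. length y = Suc (Suc m) \<and> Q y}
   = card {u. length u = m \<and> Q (True # True # u)} + card {u. length u = m \<and> Q (True # False # u)}
   + card {u. length u = m \<and> Q (False # True # u)} + card {u. length u = m \<and> Q (False # False # u)}"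
  by (simp add: card_bool_lists_Suc)

lemma precedes_10_even_weight:
  assumes "even (weight z)"
  shows "precedes (True # True # u) (True # False # z) \<longleftrightarrow> odd (weight u) \<and> weight u < weight z"
    and "precedes (True # False # u) (True # False # z)
           \<longleftrightarrow> even (weight u) \<and> weight u < weight z \<or> weight u = weight z \<and> z < u"
    and "precedes (False # True # u) (True # False # z) \<longleftrightarrow> even (weight u) \<and> weight u < weight z"
    and "precedes (False # False # u) (True # False # z) \<longleftrightarrow> odd (weight u) \<and> weight u < weight z"
  using assms unfolding precedes_def by (simp_all; presburger)+

lemma precedes_10_odd_weight:
  assumes "odd (weight z)"
  shows "precedes (True # True # u) (True # False # z) \<longleftrightarrow> odd (weight u) \<or> weight z < weight u"
    and "precedes (True # False # u) (True # False # z)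
           \<longleftrightarrow> (even (weight u) \<or> weight z < weight u) \<or> weight u = weight z \<and> u < z"
    and "precedes (False # True # u) (True # False # z) \<longleftrightarrow> even (weight u) \<or> weight z \<le> weight u"
    and "precedes (False # False # u) (True # False # z) \<longleftrightarrow> odd (weight u) \<or> weight z < weight u"
  using assms unfolding precedes_def by (simp_all; presburger)+

lemma f_lab_10_even_weight:
  assumes "even m" "length z = m" "even (weight z)"
  shows "f_lab (Suc (Suc m)) (True # False # z) + count_weight m (\<lambda>j. odd j \<and> weight z < j)
       = f_lab m (map Not z) + count_weight m (\<lambda>j. j < weight z)"
proof -
  let ?k = "weight z" and ?G = "card {u. length u = m \<and> weight u = weight z \<and> z < u}"
  have "card {u. length u = m \<and> (even (weight u) \<and> weight u < ?k \<or> weight u = ?k \<and> z < u)}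
      = count_weight m (\<lambda>j. even j \<and> j < ?k) + ?G"
    by (intro card_weight_disj) simp
  then have "card {y. length y = Suc (Suc m) \<and> precedes y (True # False # z)}
      = count_weight m (\<lambda>j. odd j \<and> j < ?k) + (count_weight m (\<lambda>j. even j \<and> j < ?k) + ?G)
      + count_weight m (\<lambda>j. even j \<and> j < ?k) + count_weight m (\<lambda>j. odd j \<and> j < ?k)"
    unfolding card_bool_lists_Suc_Suc precedes_10_even_weight[OF assms(3)]
    by (simp add: count_weight_def)
  moreover have "card {u. length u = m \<and> precedes u (map Not z)}
      = count_weight m (\<lambda>j. odd j \<or> j < ?k) + ?G"
  proof -
    have "precedes (map Not u) (map Not z)
        \<longleftrightarrow> (odd (weight u) \<or> weight u < ?k) \<or> weight u = ?k \<and> z < u"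
      if "length u = m" for u
      using precedes_map_Not_iff[OF assms(1) that assms(2)] assms(3) unfolding precedes_def by auto
    then have "{u. length u = m \<and> precedes (map Not u) (map Not z)}
        = {u. length u = m \<and> ((odd (weight u) \<or> weight u < ?k) \<or> weight u = ?k \<and> z < u)}"
      by blast
    then show ?thesis
      using card_map_Not_bool_lists[of m "\<lambda>u. precedes u (map Not z)"]
        card_weight_disj[of "\<lambda>j. odd j \<or> j < ?k" ?k m "\<lambda>u. z < u"] assms(3)
      by simp
  qed
  moreover have "2 * count_weight m (\<lambda>j. odd j \<and> j < ?k) + 2 * count_weight m (\<lambda>j. even j \<and> j < ?k)
      + count_weight m (\<lambda>j. odd j \<and> ?k < j)
      = count_weight m (\<lambda>j. odd j \<or> j < ?k) + count_weight m (\<lambda>j. j < ?k)"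
    unfolding count_weight_eq_sum sum.distrib[symmetric] sum_distrib_left
    by (rule sum.cong) (use assms(3) in auto)
  ultimately show ?thesis
    using assms f_lab_eq_Suc_card_precedes[of m "map Not z"]
      f_lab_eq_Suc_card_precedes[of "Suc (Suc m)" "True # False # z"]
    by simp
qed

lemma f_lab_10_odd_weight:
  assumes "even m" "length z = m" "odd (weight z)"
  shows "f_lab (Suc (Suc m)) (True # False # z)
       = f_lab m (map Not z) + 2 * 2 ^ m + count_weight m (\<lambda>j. weight z < j)
         + count_weight m (\<lambda>j. even j \<and> weight z < j) + (m choose weight z)"
proof -
  let ?k = "weight z" and ?L = "card {u. length u = m \<and> weight u = weight z \<and> u < z}"
  have "card {u. length u = m \<and> ((even (weight u) \<or> ?k < weight u) \<or> weight u = ?k \<and> u < z)}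
      = count_weight m (\<lambda>j. even j \<or> ?k < j) + ?L"
    using assms(3) by (intro card_weight_disj) simp
  then have "card {y. length y = Suc (Suc m) \<and> precedes y (True # False # z)}
      = count_weight m (\<lambda>j. odd j \<or> ?k < j) + (count_weight m (\<lambda>j. even j \<or> ?k < j) + ?L)
      + count_weight m (\<lambda>j. even j \<or> ?k \<le> j) + count_weight m (\<lambda>j. odd j \<or> ?k < j)"
    unfolding card_bool_lists_Suc_Suc precedes_10_odd_weight[OF assms(3)]
    by (simp add: count_weight_def)
  moreover have "card {u. length u = m \<and> precedes u (map Not z)}
      = count_weight m (\<lambda>j. odd j \<and> ?k < j) + ?L"
  proof -
    have "precedes (map Not u) (map Not z)
        \<longleftrightarrow> (odd (weight u) \<and> ?k < weight u) \<or> weight u = ?k \<and> u < z"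
      if "length u = m" for u
      using precedes_map_Not_iff[OF assms(1) that assms(2)] assms(3) unfolding precedes_def by auto
    then have "{u. length u = m \<and> precedes (map Not u) (map Not z)}
        = {u. length u = m \<and> ((odd (weight u) \<and> ?k < weight u) \<or> weight u = ?k \<and> u < z)}"
      by blast
    then show ?thesis
      using card_map_Not_bool_lists[of m "\<lambda>u. precedes u (map Not z)"]
        card_weight_disj[of "\<lambda>j. odd j \<and> ?k < j" ?k m "\<lambda>u. u < z"]
      by simp
  qed
  moreover have "count_weight m (\<lambda>j. odd j \<or> ?k < j) + count_weight m (\<lambda>j. even j \<or> ?k < j)
      + count_weight m (\<lambda>j. even j \<or> ?k \<le> j) + count_weight m (\<lambda>j. odd j \<or> ?k < j)
      = count_weight m (\<lambda>j. odd j \<and> ?k < j) + 2 * count_weight m (\<lambda>_. True)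
        + count_weight m (\<lambda>j. ?k < j) + count_weight m (\<lambda>j. even j \<and> ?k < j)
        + count_weight m (\<lambda>j. j = ?k)"
    unfolding count_weight_eq_sum sum.distrib[symmetric] sum_distrib_left
    by (rule sum.cong) (use assms(3) in auto)
  ultimately show ?thesis
    using assms f_lab_eq_Suc_card_precedes[of m "map Not z"]
      f_lab_eq_Suc_card_precedes[of "Suc (Suc m)" "True # False # z"]
    by (simp add: count_weight_True count_weight_eq_choose)
qed

lemma f_lab_10_sum_le_if_even_weight:
  assumes "even m" "0 < m" "length z1 = m" "length z2 = m" "even (weight z1)"
    and "weight z1 = Suc (weight z2) \<or> weight z2 = Suc (weight z1)"
  shows "f_lab (Suc (Suc m)) (True # False # z1) + f_lab (Suc (Suc m)) (True # False # z2)
     \<le> f_lab m (map Not z1) + f_lab m (map Not z2) + 3 * 2 ^ m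
       + ((m - 1) choose (m div 2)) + (m choose (m div 2))"
proof -
  obtain p where p: "m = Suc p"
    using assms(2) gr0_implies_Suc by blast
  have odd2: "odd (weight z2)"
    using assms(5,6) by auto
  note z1 = f_lab_10_even_weight[OF assms(1,3,5)]
  note z2 = f_lab_10_odd_weight[OF assms(1,4) odd2]
  have alternating: "count_weight m (\<lambda>j. even j \<and> weight z2 < j)
      = count_weight m (\<lambda>j. odd j \<and> weight z2 < j) + (p choose weight z2)"
    using count_weight_even_odd_above[OF odd2, of p] p by simp
  have "p choose (p div 2) = p choose (m div 2)"
  proof -
    have "p - p div 2 = m div 2"
      using p assms(1) by presburger
    then show ?thesis
      using binomial_symmetric[of "p div 2" p] by simp
  qed
  then have "p choose weight z2 \<le> p choose (m div 2)"
    using binomial_maximum[of p] by simp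
  from assms(6) show ?thesis
  proof
    assume w: "weight z1 = Suc (weight z2)"
    have "count_weight m (\<lambda>j. odd j \<and> weight z1 < j) = count_weight m (\<lambda>j. odd j \<and> weight z2 < j)"
      "count_weight m (\<lambda>j. j < weight z1) + count_weight m (\<lambda>j. weight z2 < j)
         = count_weight m (\<lambda>_. True)"
      unfolding count_weight_eq_sum sum.distrib[symmetric] w
      by (rule sum.cong; use odd2 in \<open>auto; presburger\<close>)+
    then show ?thesis
      using z1 z2 alternating binomial_maximum[of m "weight z2"] \<open>p choose _ \<le> _\<close> p
      by (simp add: count_weight_True)
  next
    assume w: "weight z2 = Suc (weight z1)"
    have "count_weight m (\<lambda>j. odd j \<and> weight z1 < j)
        = count_weight m (\<lambda>j. odd j \<and> weight z2 < j) + count_weight m (\<lambda>j. j = weight z2)"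
      "count_weight m (\<lambda>j. j < weight z1) + count_weight m (\<lambda>j. weight z2 < j)
         + count_weight m (\<lambda>j. j = weight z1) + count_weight m (\<lambda>j. j = weight z2)
         = count_weight m (\<lambda>_. True)"
      unfolding count_weight_eq_sum sum.distrib[symmetric] w
      by (rule sum.cong; use odd2 w in auto)+
    then show ?thesis
      using z1 z2 alternating p w binomial_right_mono[of p m]
      by (simp add: count_weight_True count_weight_eq_choose)
  qed
qed

section \<open>Adjacency and strength\<close>

lemma Q_adj_sym: "Q_adj n u v \<Longrightarrow> Q_adj n v u"
  unfolding Q_adj_def by (simp add: eq_commute)

lemma Q_adj_map_Not:
  assumes "Q_adj n u v"
  shows "Q_adj n (map Not u) (map Not v)"
proof -
  have "{i. i < n \<and> map Not u ! i \<noteq> map Not v ! i} = {i. i < n \<and> u ! i \<noteq> v ! i}"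
    using assms unfolding Q_adj_def by auto
  with assms show ?thesis
    unfolding Q_adj_def by simp
qed

lemma Q_adj_Cons_Cons: "Q_adj (Suc n) (a # u) (a # v) \<longleftrightarrow> Q_adj n u v"
proof -
  have "{i. i < Suc n \<and> (a # u) ! i \<noteq> (a # v) ! i} = Suc ` {i. i < n \<and> u ! i \<noteq> v ! i}"
  proof (intro set_eqI iffI)
    fix i assume "i \<in> {i. i < Suc n \<and> (a # u) ! i \<noteq> (a # v) ! i}"
    then show "i \<in> Suc ` {i. i < n \<and> u ! i \<noteq> v ! i}"
      by (cases i) auto
  next
    fix i assume "i \<in> Suc ` {i. i < n \<and> u ! i \<noteq> v ! i}"
    then show "i \<in> {i. i < Suc n \<and> (a # u) ! i \<noteq> (a # v) ! i}"
      by auto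
  qed
  then show ?thesis
    unfolding Q_adj_def by (simp add: card_image)
qed

lemma Q_adj_weight:
  assumes "Q_adj n u v"
  shows "weight u = Suc (weight v) \<or> weight v = Suc (weight u)"
proof -
  obtain k where k: "{i. i < n \<and> u ! i \<noteq> v ! i} = {k}"
    using assms unfolding Q_adj_def by (meson card_1_singletonE)
  then have k_less: "k < n" and differ: "u ! k \<noteq> v ! k"
    and agree: "\<And>i. i < n \<Longrightarrow> i \<noteq> k \<Longrightarrow> u ! i = v ! i"
    by auto
  let ?U = "{i. i < n \<and> u ! i}" and ?V = "{i. i < n \<and> v ! i}"
  have "length u = n" "length v = n"
    using assms unfolding Q_adj_def by auto
  then have weights: "weight u = card ?U" "weight v = card ?V"
    by (simp_all add: weight_eq_card)
  show ?thesis
  proof (cases "u ! k")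
    case True
    then have "?U = insert k ?V" "k \<notin> ?V"
      using agree k_less differ by auto
    then show ?thesis
      using weights by simp
  next
    case False
    then have "?V = insert k ?U" "k \<notin> ?U"
      using agree k_less differ by auto
    then show ?thesis
      using weights by simp
  qed
qed

lemma le_strength:
  assumes "Q_adj n u v"
  shows "f u + f v \<le> strength n f"
proof -
  have "finite {u :: bool list. length u = n}"
    using finite_lists_length_eq[of "UNIV :: bool set" n] by simp
  then have "finite ((\<lambda>(u, v). f u + f v) ` ({u. length u = n} \<times> {u. length u = n}))"
    by simp
  moreover have "{f u + f v | u v. Q_adj n u v}
      \<subseteq> (\<lambda>(u, v). f u + f v) ` ({u. length u = n} \<times> {u. length u = n})"
    unfolding Q_adj_def by auto
  ultimately have "finite {f u + f v | u v. Q_adj n u v}"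
    by (rule finite_subset[rotated])
  with assms show ?thesis
    unfolding strength_def by (intro Max_ge) auto
qed

lemma f_lab_10_sum_le:
  assumes "even m" "0 < m" "Q_adj m z1 z2"
  shows "f_lab (Suc (Suc m)) (True # False # z1) + f_lab (Suc (Suc m)) (True # False # z2)
     \<le> strength m (f_lab m) + 3 * 2 ^ m + ((m - 1) choose (m div 2)) + (m choose (m div 2))"
proof -
  have len: "length z1 = m" "length z2 = m"
    using assms(3) unfolding Q_adj_def by auto
  have "f_lab (Suc (Suc m)) (True # False # z1) + f_lab (Suc (Suc m)) (True # False # z2)
     \<le> f_lab m (map Not z1) + f_lab m (map Not z2) + 3 * 2 ^ m
       + ((m - 1) choose (m div 2)) + (m choose (m div 2))"
  proof (cases "even (weight z1)")
    case True
    show ?thesis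
      by (rule f_lab_10_sum_le_if_even_weight[OF assms(1,2) len True Q_adj_weight[OF assms(3)]])
  next
    case False
    then have "even (weight z2)"
      using Q_adj_weight[OF assms(3)] by auto
    then show ?thesis
      using f_lab_10_sum_le_if_even_weight[OF assms(1,2) len(2,1) _ Q_adj_weight[OF Q_adj_sym[OF assms(3)]]]
      by linarith
  qed
  moreover have "f_lab m (map Not z1) + f_lab m (map Not z2) \<le> strength m (f_lab m)"
    using assms(3) by (intro le_strength Q_adj_map_Not)
  ultimately show ?thesis
    by linarith
qed

theorem theorem2p8:
  fixes n :: nat and x y :: "bool list"
  assumes "n \<ge> 5" and "even n"
    and "Q_adj n x y"
    and "f_lab n x + f_lab n y = strength n (f_lab n)"
    and "take 2 x = [True, False]" and "take 2 y = [True, False]"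
  shows "strength n (f_lab n) \<le> strength (n - 2) (f_lab (n - 2)) + 3 * 2 ^ (n - 2)
           + ((n - 3) choose (nat \<lceil>real (n - 3) / 2\<rceil>))
           + ((n - 2) choose (nat \<lceil>real (n - 2) / 2\<rceil>))"
proof -
  define m where "m = n - 2"
  have n: "n = Suc (Suc m)" and m: "even m" "0 < m"
    using assms(1,2) by (auto simp: m_def)
  obtain z1 z2 where x: "x = True # False # z1" and y: "y = True # False # z2"
    using assms(5,6) by (metis append_Cons append_Nil append_take_drop_id)
  have "Q_adj m z1 z2"
    using assms(3) unfolding x y n Q_adj_Cons_Cons .
  note sum_le = f_lab_10_sum_le[OF m this, folded x y n]
  obtain q where q: "m = 2 * q" "0 < q"
    using m by auto
  then have "\<lceil>real (n - 3) / 2\<rceil> = int q" "\<lceil>real (n - 2) / 2\<rceil> = int q"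
    using n by (auto intro!: ceiling_unique simp: of_nat_diff)
  then have "(n - 3 choose nat \<lceil>real (n - 3) / 2\<rceil>) = (m - 1) choose (m div 2)"
    "(n - 2 choose nat \<lceil>real (n - 2) / 2\<rceil>) = m choose (m div 2)"
    using n q by simp_all
  with sum_le show ?thesis
    using assms(4) unfolding m_def by linarith
qed

end
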